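(* Let $G$ be a finite group with irreducible complex characters $\varphi_1,\dots,\varphi_t$, and let $Q$ be a quasigroup of order $|G|$. Then $Q$ is a balanced cover of the weighted character quasigroup of $G$ if and only if there exist pairwise disjoint subsets $S_1,\dots,S_t\subseteq Q$ with $|S_i|=\varphi_i(1)^2$ for each $i$ and $$S_i\cdot S_j=\sum_{k=1}^t\frac{\varphi_i(1)\varphi_j(1)\langle\varphi_i\cdot\varphi_j\mid\varphi_k\rangle}{\varphi_k(1)}\,S_k\qquad\text{for all }1\le i,j\le t.$$
   Context: The scalar product is $\langle\theta\mid\varphi\rangle=\frac{1}{|G|}\sum_{g\in G}\theta(g)\overline{\varphi(g)}$. The weighted character quasigroup of $G$ consists of the set $\{\varphi_1,\dots,\varphi_t\}$ with weights $w(\varphi_i)=\varphi_i(1)^2$ and multiplication function $\alpha(\varphi_i,\varphi_j,\varphi_k)=\varphi_i(1)\varphi_j(1)\varphi_k(1)\langle\varphi_i\varphi_j\mid\varphi_k\rangle$. A quasigroup $Q$ of order $|G|$ covers it if there is a surjection $f:Q\to\{\varphi_1,\dots,\varphi_t\}$ with $|f^{-1}\{\varphi_i\}|=\varphi_i(1)^2$ and $|\{(a,b)\in f^{-1}\{\varphi_i\}\times f^{-1}\{\varphi_j\} : f(ab)=\varphi_k\}|=\alpha(\varphi_i,\varphi_j,\varphi_k)$ for all $i,j,k$. The cover is balanced if, for all $i,j$ and all $q\in Q$, the number $m_q$ of pairs $(a,b)\in f^{-1}\{\varphi_i\}\times f^{-1}\{\varphi_j\}$ with $ab=q$ depends only on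 $f(q)$. For subsets (or multisubsets) $A,B$ of $Q$, $A\cdot B$ denotes the formal sum $\sum_{a\in A,b\in B}ab$ in the free $\mathbb{N}$-semimodule $\mathbb{N}Q$ on $Q$ (so it records multiplicities), and a subset $S$ is identified with $\sum_{q\in S}q$. *)

theory Defs
  imports "HOL-Algebra.Group" "Jordan_Normal_Form.Matrix"
begin

definition mat_trace :: "complex mat \<Rightarrow> complex" where
  "mat_trace A = (\<Sum>i<dim_row A. A $$ (i,i))"

definition is_rep :: "('a, 'b) monoid_scheme \<Rightarrow> nat \<Rightarrow> ('a \<Rightarrow> complex mat) \<Rightarrow> bool" where
  "is_rep G n \<rho> \<longleftrightarrow>
     (\<forall>g\<in>carrier G. \<rho> g \<in> carrier_mat n n) \<and>
     \<rho> \<one>\<^bsub>G\<^esub> = 1\<^sub>m n \<and>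
     (\<forall>g\<in>carrier G. \<forall>h\<in>carrier G. \<rho> (g \<otimes>\<^bsub>G\<^esub> h) = \<rho> g * \<rho> h)"

definition is_subspace :: "nat \<Rightarrow> complex vec set \<Rightarrow> bool" where
  "is_subspace n W \<longleftrightarrow> W \<subseteq> carrier_vec n \<and> 0\<^sub>v n \<in> W \<and>
     (\<forall>v\<in>W. \<forall>w\<in>W. v + w \<in> W) \<and> (\<forall>c. \<forall>v\<in>W. c \<cdot>\<^sub>v v \<in> W)"

definition irreducible_rep :: "('a, 'b) monoid_scheme \<Rightarrow> nat \<Rightarrow> ('a \<Rightarrow> complex mat) \<Rightarrow> bool" where
  "irreducible_rep G n \<rho> \<longleftrightarrow> is_rep G n \<rho> \<and> n > 0 \<and>
     (\<forall>W. is_subspace n W \<and> (\<forall>g\<in>carrier G. \<forall>w\<in>W. \<rho> g *\<^sub>v w \<in> W)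
          \<longrightarrow> W = {0\<^sub>v n} \<or> W = carrier_vec n)"

definition character_of :: "('a, 'b) monoid_scheme \<Rightarrow> ('a \<Rightarrow> complex mat) \<Rightarrow> 'a \<Rightarrow> complex" where
  "character_of G \<rho> = (\<lambda>g. if g \<in> carrier G then mat_trace (\<rho> g) else 0)"

definition irr_char :: "('a, 'b) monoid_scheme \<Rightarrow> ('a \<Rightarrow> complex) \<Rightarrow> bool" where
  "irr_char G \<chi> \<longleftrightarrow> (\<exists>n \<rho>. irreducible_rep G n \<rho> \<and> \<chi> = character_of G \<rho>)"

definition enumerates_irr_chars :: "('a, 'b) monoid_scheme \<Rightarrow> nat \<Rightarrow> (nat \<Rightarrow> 'a \<Rightarrow> complex) \<Rightarrow> bool" where
  "enumerates_irr_chars G t \<phi> \<longleftrightarrow> inj_on \<phi> {..<t} \<and> \<phi> ` {..<t} = {\<chi>. irr_char G \<chi>}"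

definition char_scalar :: "('a, 'b) monoid_scheme \<Rightarrow> ('a \<Rightarrow> complex) \<Rightarrow> ('a \<Rightarrow> complex) \<Rightarrow> complex" where
  "char_scalar G \<theta> \<psi> = (1 / of_nat (card (carrier G))) * (\<Sum>g\<in>carrier G. \<theta> g * cnj (\<psi> g))"

definition wcq_weight :: "('a, 'b) monoid_scheme \<Rightarrow> ('a \<Rightarrow> complex) \<Rightarrow> complex" where
  "wcq_weight G \<chi> = (\<chi> \<one>\<^bsub>G\<^esub>)\<^sup>2"

definition wcq_alpha :: "('a, 'b) monoid_scheme \<Rightarrow> ('a \<Rightarrow> complex) \<Rightarrow> ('a \<Rightarrow> complex) \<Rightarrow> ('a \<Rightarrow> complex) \<Rightarrow> complex" where
  "wcq_alpha G \<chi> \<psi> \<eta> = \<chi> \<one>\<^bsub>G\<^esub> * \<psi> \<one>\<^bsub>G\<^esub> * \<eta> \<one>\<^bsub>G\<^esub> *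
      char_scalar G (\<lambda>g. \<chi> g * \<psi> g) \<eta>"

definition quasigroup :: "'q set \<Rightarrow> ('q \<Rightarrow> 'q \<Rightarrow> 'q) \<Rightarrow> bool" where
  "quasigroup Q m \<longleftrightarrow> (\<forall>a\<in>Q. \<forall>b\<in>Q. m a b \<in> Q) \<and>
     (\<forall>a\<in>Q. \<forall>b\<in>Q. \<exists>!x. x \<in> Q \<and> m a x = b) \<and>
     (\<forall>a\<in>Q. \<forall>b\<in>Q. \<exists>!y. y \<in> Q \<and> m y a = b)"

definition wcq_cover ::
  "('a, 'b) monoid_scheme \<Rightarrow> nat \<Rightarrow> (nat \<Rightarrow> 'a \<Rightarrow> complex) \<Rightarrow> 'q set \<Rightarrow> ('q \<Rightarrow> 'q \<Rightarrow> 'q)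
     \<Rightarrow> ('q \<Rightarrow> 'a \<Rightarrow> complex) \<Rightarrow> bool" where
  "wcq_cover G t \<phi> Q m f \<longleftrightarrow>
     f ` Q = \<phi> ` {..<t} \<and>
     (\<forall>i<t. of_nat (card {q\<in>Q. f q = \<phi> i}) = wcq_weight G (\<phi> i)) \<and>
     (\<forall>i<t. \<forall>j<t. \<forall>k<t.
        of_nat (card {(a,b) \<in> {q\<in>Q. f q = \<phi> i} \<times> {q\<in>Q. f q = \<phi> j}. f (m a b) = \<phi> k})
          = wcq_alpha G (\<phi> i) (\<phi> j) (\<phi> k))"

definition wcq_balanced_cover ::
  "('a, 'b) monoid_scheme \<Rightarrow> nat \<Rightarrow> (nat \<Rightarrow> 'a \<Rightarrow> complex) \<Rightarrow> 'q set \<Rightarrow> ('q \<Rightarrow> 'q \<Rightarrow> 'q)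
     \<Rightarrow> ('q \<Rightarrow> 'a \<Rightarrow> complex) \<Rightarrow> bool" where
  "wcq_balanced_cover G t \<phi> Q m f \<longleftrightarrow> wcq_cover G t \<phi> Q m f \<and>
     (\<forall>i<t. \<forall>j<t. \<forall>q\<in>Q. \<forall>q'\<in>Q. f q = f q' \<longrightarrow>
        card {(a,b) \<in> {x\<in>Q. f x = \<phi> i} \<times> {x\<in>Q. f x = \<phi> j}. m a b = q}
        = card {(a,b) \<in> {x\<in>Q. f x = \<phi> i} \<times> {x\<in>Q. f x = \<phi> j}. m a b = q'})"

text \<open>Multiplicity of q in the formal sum A . B in NQ.\<close>
definition prod_mult :: "('q \<Rightarrow> 'q \<Rightarrow> 'q) \<Rightarrow> 'q set \<Rightarrow> 'q set \<Rightarrow> 'q \<Rightarrow> nat" where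
  "prod_mult m A B q = card {(a,b) \<in> A \<times> B. m a b = q}"

end

theory Submission
  imports Defs "Jordan_Normal_Form.VS_Connect"
begin

text \<open>
  If f is a balanced cover with fibres S_i, the pairs of S_i x S_j whose product lies in S_k number
  alpha(phi_i, phi_j, phi_k), and balancedness makes the multiplicity of q in S_i . S_j constant on
  S_k; dividing by |S_k| = phi_k(1)^2 gives the stated coefficient. Conversely, the same count turns
  the product rule for the S_i back into the cover conditions, once disjoint sets of sizes phi_i(1)^2
  are known to exhaust Q, i.e. once sum_i phi_i(1)^2 >= |G|.

  That inequality says that the matrix coefficients of the irreducible representations span the
  functions on G. If f is orthogonal to all of them, so is its autocorrelation h. Every
  representation is block triangular with irreducible diagonal blocks, so h pairs to zero with every
  character; for the regular character this reads |G| h(1) = |G| sum |f|^2 = 0.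
\<close>

section \<open>Linear algebra in C^n\<close>

lemma mat_trace_mult_commute:
  assumes "A \<in> carrier_mat n m" "B \<in> carrier_mat m n"
  shows "mat_trace (A * B) = mat_trace (B * A)"
proof -
  have "mat_trace (A * B) = (\<Sum>i<n. \<Sum>j<m. A $$ (i,j) * B $$ (j,i))"
    using assms unfolding mat_trace_def
    by (auto simp: scalar_prod_def lessThan_atLeast0 intro!: sum.cong)
  also have "\<dots> = (\<Sum>j<m. \<Sum>i<n. B $$ (j,i) * A $$ (i,j))"
    by (subst sum.swap) (simp add: mult.commute)
  also have "\<dots> = mat_trace (B * A)"
    using assms unfolding mat_trace_def
    by (auto simp: scalar_prod_def lessThan_atLeast0 intro!: sum.cong)
  finally show ?thesis .
qed

lemma mat_mult_index_sum:
  assumes "A \<in> carrier_mat n k" "B \<in> carrier_mat k m" "i < n" "j < m"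
  shows "(A * B) $$ (i,j) = (\<Sum>c<k. A $$ (i,c) * B $$ (c,j))"
  using assms by (auto simp: scalar_prod_def lessThan_atLeast0 intro!: sum.cong)

context vec_space
begin

lemma subspace_has_finite_basis:
  assumes sub: "submodule class_ring W V"
  obtains A where "finite A" "A \<subseteq> W" "lin_indpt A" "span A = W"
proof -
  have Wc: "W \<subseteq> carrier_vec n" using sub unfolding submodule_def by auto
  let ?P = "\<lambda>S. S \<subseteq> W \<and> lin_indpt S"
  have "\<And>S. ?P S \<Longrightarrow> finite S \<and> card S \<le> n"
    using li_le_dim[OF fin_dim] Wc dim_is_n by fastforce
  moreover have "?P {}" unfolding lin_dep_def by auto
  ultimately obtain A where fA: "finite A" and maxA: "maximal A ?P"
    using maximal_exists[of ?P] by blast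
  have AW: "A \<subseteq> W" and liA: "lin_indpt A" using maxA unfolding maximal_def by auto
  have Ac: "A \<subseteq> carrier_vec n" using AW Wc by auto
  have "W \<subseteq> span A"
  proof
    fix v assume vW: "v \<in> W"
    show "v \<in> span A"
    proof (rule ccontr)
      assume nv: "v \<notin> span A"
      hence vA: "v \<notin> A" using in_own_span[OF Ac] by auto
      have "v \<in> carrier_vec n" using vW Wc by auto
      hence "\<not> lin_dep (A \<union> {v})" using lin_dep_iff_in_span[OF Ac liA _ vA] nv by simp
      hence "A \<union> {v} = A" using maxA vW AW unfolding maximal_def by blast
      thus False using vA by auto
    qed
  qed
  hence "span A = W" using span_is_subset[OF AW sub] by auto
  with fA AW liA show ?thesis by (rule that)
qed

lemma extend_lin_indpt_to_spanning:
  assumes fA: "finite A" and Ac: "A \<subseteq> carrier_vec n" and liA: "lin_indpt A"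
  obtains C where "finite C" "C \<subseteq> carrier_vec n" "card A + card C \<le> n"
    "span (A \<union> C) = carrier_vec n"
proof -
  have Uc: "set (unit_vecs n) \<subseteq> carrier_vec n" unfolding unit_vecs_def by auto
  have cU: "card (set (unit_vecs n :: 'a vec list)) = n" using distinct_card[OF unit_vecs_distinct] by simp
  have "A \<subseteq> span (set (unit_vecs n))" using Ac by (simp only: span_unit_vecs_is_carrier)
  from replacement[OF fA finite_set Uc liA this] obtain C where
    "finite C \<and> C \<subseteq> carrier_vec n \<and> C \<subseteq> span (set (unit_vecs n)) \<and> C \<inter> A = {} \<and>
      int (card C) \<le> int (card (set (unit_vecs n :: 'a vec list))) - int (card A) \<and>
      span (A \<union> C) = span (set (unit_vecs n))" ..
  hence "finite C" "C \<subseteq> carrier_vec n" "card A + card C \<le> n" "span (A \<union> C) = carrier_vec n"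
    using cU span_unit_vecs_is_carrier by auto
  thus ?thesis by (rule that)
qed

lemma proper_subspace_adapted_basis:
  assumes sub: "submodule class_ring W V"
    and W0: "W \<noteq> {0\<^sub>v n}" and Wn: "W \<noteq> carrier_vec n"
  obtains ws k where "length ws = n" "set ws \<subseteq> carrier_vec n" "0 < k" "k < n"
    "span (set ws) = carrier_vec n" "span (set (take k ws)) = W"
proof -
  obtain A where fA: "finite A" and AW: "A \<subseteq> W" and liA: "lin_indpt A" and spA: "span A = W"
    using subspace_has_finite_basis[OF sub] .
  have Ac: "A \<subseteq> carrier_vec n" using AW sub unfolding submodule_def by auto
  have "A \<noteq> {}" using spA W0 span_empty by auto
  hence A0: "0 < card A" using fA by (simp add: card_gt_0_iff)
  have An: "card A < n"
  proof (rule ccontr)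
    assume "\<not> card A < n"
    hence "basis A" using dim_li_is_basis[OF fin_dim fA Ac liA] dim_is_n by auto
    thus False using spA Wn unfolding basis_def by auto
  qed
  obtain C where fC: "finite C" and Cc: "C \<subseteq> carrier_vec n"
    and cC: "card A + card C \<le> n" and spAC: "span (A \<union> C) = carrier_vec n"
    using extend_lin_indpt_to_spanning[OF fA Ac liA] .
  obtain la where la: "set la = A" "distinct la" using finite_distinct_list[OF fA] by blast
  obtain lc where lc: "set lc = C" "distinct lc" using finite_distinct_list[OF fC] by blast
  \<comment> \<open>zero vectors pad the list to length n without changing its span\<close>
  define ws where "ws = la @ lc @ replicate (n - card A - card C) (0\<^sub>v n)"
  have "length la = card A" "length lc = card C"
    using distinct_card[OF la(2)] distinct_card[OF lc(2)] la(1) lc(1) by simp_all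
  hence len: "length ws = n" using cC unfolding ws_def by simp
  have wsc: "set ws \<subseteq> carrier_vec n" unfolding ws_def using la lc Ac Cc by auto
  have "take (card A) ws = la"
    unfolding ws_def using distinct_card[OF la(2)] la(1) by simp
  hence tk: "span (set (take (card A) ws)) = W" using la(1) spA by simp
  have "span (set ws) = carrier_vec n"
  proof -
    have "span (A \<union> C) \<subseteq> span (set ws)"
      by (rule span_is_monotone) (auto simp: ws_def la lc)
    thus ?thesis using spAC span_is_subset2[OF wsc] by auto
  qed
  thus ?thesis by (rule that[OF len wsc A0 An _ tk])
qed

lemma in_span_mat_of_cols:
  assumes "set us \<subseteq> carrier_vec n" "v \<in> span (set us)"
  obtains c where "v = mat_of_cols n us *\<^sub>v vec (length us) c"
proof -
  have "v \<in> span_list us" using span_list_as_span[OF assms(1)] assms(2) by simp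
  then obtain c where "v = lincomb_list c us" by (auto elim: in_span_listE)
  moreover have "\<forall>w\<in>set us. dim_vec w = n" using assms(1) by auto
  ultimately show ?thesis using lincomb_list_as_mat_mult that by metis
qed

lemma spanning_cols_invertible:
  assumes len: "length ws = n" and wsc: "set ws \<subseteq> carrier_vec n"
    and sp: "span (set ws) = carrier_vec n"
  obtains S where "S \<in> carrier_mat n n" "mat_of_cols n ws * S = 1\<^sub>m n" "S * mat_of_cols n ws = 1\<^sub>m n"
proof -
  define T where "T = mat_of_cols n ws"
  have Tc: "T \<in> carrier_mat n n" unfolding T_def using len by auto
  have "\<exists>c. unit_vec n j = T *\<^sub>v vec n c" if "j < n" for j
    using in_span_mat_of_cols[OF wsc, of "unit_vec n j"] sp that len unfolding T_def by auto
  then obtain cf where cf: "\<And>j. j < n \<Longrightarrow> unit_vec n j = T *\<^sub>v vec n (cf j)" by metis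
  define S where "S = mat n n (\<lambda>(a,j). cf j a)"
  have Sc: "S \<in> carrier_mat n n" unfolding S_def by auto
  have TS: "T * S = 1\<^sub>m n"
  proof (rule eq_matI)
    fix i j assume i: "i < dim_row (1\<^sub>m n)" and j: "j < dim_col (1\<^sub>m n)"
    have "col S j = vec n (cf j)" using j unfolding S_def by (auto simp: col_def)
    hence "(T * S) $$ (i,j) = unit_vec n j $ i" using cf[of j] i j Tc Sc by auto
    thus "(T * S) $$ (i,j) = 1\<^sub>m n $$ (i,j)" using i j by auto
  qed (use Tc Sc in auto)
  show ?thesis
    by (rule that[OF Sc TS[unfolded T_def] mat_mult_left_right_inverse[OF Tc Sc TS, unfolded T_def]])
qed

end

section \<open>Block triangular decomposition of representations\<close>

lemma sum_lessThan_split_shift: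
  fixes f :: "nat \<Rightarrow> 'c :: comm_monoid_add"
  assumes "k \<le> n"
  shows "(\<Sum>c<n. f c) = (\<Sum>c<k. f c) + (\<Sum>c<n-k. f (c+k))"
proof -
  have "(\<Sum>c<n. f c) = (\<Sum>c\<in>{0..<k}. f c) + (\<Sum>c\<in>{k..<n}. f c)"
    using assms by (simp add: lessThan_atLeast0 sum.atLeastLessThan_concat)
  also have "(\<Sum>c\<in>{k..<n}. f c) = (\<Sum>c\<in>{0..<n-k}. f (c+k))"
    using sum.shift_bounds_nat_ivl[of f 0 k "n-k"] assms by simp
  finally show ?thesis by (simp add: lessThan_atLeast0)
qed

lemma is_rep_carrier_mat: "is_rep G n \<rho> \<Longrightarrow> g \<in> carrier G \<Longrightarrow> \<rho> g \<in> carrier_mat n n"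
  unfolding is_rep_def by blast

lemma is_rep_mult: "is_rep G n \<rho> \<Longrightarrow> g \<in> carrier G \<Longrightarrow> h \<in> carrier G \<Longrightarrow>
    \<rho> (g \<otimes>\<^bsub>G\<^esub> h) = \<rho> g * \<rho> h"
  unfolding is_rep_def by blast

lemma character_of_one:
  assumes "group G" "is_rep G n \<rho>"
  shows "character_of G \<rho> \<one>\<^bsub>G\<^esub> = of_nat n"
  using assms unfolding character_of_def is_rep_def mat_trace_def
  by (simp add: group.is_monoid monoid.one_closed)

lemma mat_trace_split_blocks:
  assumes "A \<in> carrier_mat n n" "k \<le> n"
  shows "mat_trace A = mat_trace (mat k k (\<lambda>(a,b). A $$ (a,b)))
      + mat_trace (mat (n-k) (n-k) (\<lambda>(a,b). A $$ (a+k,b+k)))"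
  using assms unfolding mat_trace_def by (simp add: sum_lessThan_split_shift)

context
  fixes G :: "('a, 'b) monoid_scheme" and n k :: nat and M :: "'a \<Rightarrow> complex mat"
  assumes rep: "is_rep G n M" and kn: "k \<le> n"
    and blk: "\<And>g a b. g \<in> carrier G \<Longrightarrow> k \<le> a \<Longrightarrow> a < n \<Longrightarrow> b < k \<Longrightarrow> M g $$ (a,b) = 0"
begin

lemma block_triangular_mult_index:
  assumes "g \<in> carrier G" "h \<in> carrier G" "a < n" "b < n"
  shows "M (g \<otimes>\<^bsub>G\<^esub> h) $$ (a,b) = (\<Sum>c<k. M g $$ (a,c) * M h $$ (c,b))
      + (\<Sum>c<n-k. M g $$ (a,c+k) * M h $$ (c+k,b))"
proof -
  have "M (g \<otimes>\<^bsub>G\<^esub> h) $$ (a,b) = (\<Sum>c<n. M g $$ (a,c) * M h $$ (c,b))"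
    using assms is_rep_mult[OF rep] mat_mult_index_sum[OF is_rep_carrier_mat[OF rep] is_rep_carrier_mat[OF rep]]
    by simp
  thus ?thesis by (simp add: sum_lessThan_split_shift[OF kn])
qed

lemma upper_block_rep: "is_rep G k (\<lambda>g. mat k k (\<lambda>(a,b). M g $$ (a,b)))"
  unfolding is_rep_def
proof (intro conjI ballI)
  fix g h assume g: "g \<in> carrier G" and h: "h \<in> carrier G"
  show "mat k k (\<lambda>(a,b). M (g \<otimes>\<^bsub>G\<^esub> h) $$ (a,b))
      = mat k k (\<lambda>(a,b). M g $$ (a,b)) * mat k k (\<lambda>(a,b). M h $$ (a,b))"
    using block_triangular_mult_index[OF g h] blk[OF h] kn
    by (intro eq_matI) (auto simp: scalar_prod_def lessThan_atLeast0 intro!: sum.cong)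
qed (use rep kn in \<open>auto simp: is_rep_def\<close>)

lemma lower_block_rep: "is_rep G (n-k) (\<lambda>g. mat (n-k) (n-k) (\<lambda>(a,b). M g $$ (a+k,b+k)))"
  unfolding is_rep_def
proof (intro conjI ballI)
  fix g h assume g: "g \<in> carrier G" and h: "h \<in> carrier G"
  show "mat (n-k) (n-k) (\<lambda>(a,b). M (g \<otimes>\<^bsub>G\<^esub> h) $$ (a+k,b+k))
      = mat (n-k) (n-k) (\<lambda>(a,b). M g $$ (a+k,b+k)) * mat (n-k) (n-k) (\<lambda>(a,b). M h $$ (a+k,b+k))"
    using block_triangular_mult_index[OF g h] blk[OF g]
    by (intro eq_matI) (auto simp: scalar_prod_def lessThan_atLeast0 intro!: sum.cong)
qed (use rep kn in \<open>auto simp: is_rep_def\<close>)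

end

lemma rep_conjugate:
  assumes rep: "is_rep G n \<pi>" and Tc: "T \<in> carrier_mat n n" and Sc: "S \<in> carrier_mat n n"
    and TS: "T * S = 1\<^sub>m n" and ST: "S * T = 1\<^sub>m n"
  shows "is_rep G n (\<lambda>g. S * \<pi> g * T)"
    and "\<And>g. g \<in> carrier G \<Longrightarrow> mat_trace (S * \<pi> g * T) = mat_trace (\<pi> g)"
proof -
  note \<pi>c = is_rep_carrier_mat[OF rep]
  show "is_rep G n (\<lambda>g. S * \<pi> g * T)"
    unfolding is_rep_def
  proof (intro conjI ballI)
    fix g h assume g: "g \<in> carrier G" and h: "h \<in> carrier G"
    have "S * \<pi> (g \<otimes>\<^bsub>G\<^esub> h) * T = S * (\<pi> g * (T * S) * \<pi> h) * T"
      using is_rep_mult[OF rep g h] TS \<pi>c[OF g] by simp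
    also have "\<dots> = (S * \<pi> g * T) * (S * \<pi> h * T)"
      using \<pi>c[OF g] \<pi>c[OF h] Sc Tc by (simp add: assoc_mult_mat[of _ n n _ n _ n])
    finally show "S * \<pi> (g \<otimes>\<^bsub>G\<^esub> h) * T = (S * \<pi> g * T) * (S * \<pi> h * T)" .
  qed (use rep Sc Tc ST \<pi>c in \<open>auto simp: is_rep_def\<close>)
  fix g assume g: "g \<in> carrier G"
  have "mat_trace (S * \<pi> g * T) = mat_trace ((\<pi> g * T) * S)"
    using \<pi>c[OF g] Sc Tc
    by (simp add: assoc_mult_mat[of S n n _ n] mat_trace_mult_commute[of S n n])
  also have "\<dots> = mat_trace (\<pi> g)"
    using \<pi>c[OF g] Sc Tc TS by (simp add: assoc_mult_mat[of _ n n T n S n])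
  finally show "mat_trace (S * \<pi> g * T) = mat_trace (\<pi> g)" .
qed

lemma (in vec_space) coords_in_prefix_span_vanish:
  assumes len: "length ws = n" and wsc: "set ws \<subseteq> carrier_vec n"
    and Sc: "S \<in> carrier_mat n n" and ST: "S * mat_of_cols n ws = 1\<^sub>m n"
    and v: "v \<in> span (set (take k ws))" and a: "k \<le> a" "a < n"
  shows "(S *\<^sub>v v) $ a = 0"
proof -
  have tkc: "set (take k ws) \<subseteq> carrier_vec n" using wsc set_take_subset by fast
  obtain c where c: "v = mat_of_cols n (take k ws) *\<^sub>v vec (length (take k ws)) c"
    using in_span_mat_of_cols[OF tkc v] .
  define c' where "c' = vec n (\<lambda>i. if i < k then c i else 0)"
  have "v = mat_of_cols n ws *\<^sub>v c'"
  proof (rule eq_vecI)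
    fix r assume "r < dim_vec (mat_of_cols n ws *\<^sub>v c')"
    hence r: "r < n" by simp
    have "v $ r = (\<Sum>i<k. ws ! i $ r * c i)"
      using c r a len by (auto simp: scalar_prod_def lessThan_atLeast0 mat_of_cols_index intro!: sum.cong)
    also have "\<dots> = (\<Sum>i<n. ws ! i $ r * c' $ i)"
      using a by (intro sum.mono_neutral_cong_left) (auto simp: c'_def)
    also have "\<dots> = (mat_of_cols n ws *\<^sub>v c') $ r"
      using r len by (auto simp: scalar_prod_def lessThan_atLeast0 mat_of_cols_index c'_def intro!: sum.cong)
    finally show "v $ r = (mat_of_cols n ws *\<^sub>v c') $ r" .
  qed (use c in simp)
  moreover have "mat_of_cols n ws \<in> carrier_mat n n" "c' \<in> carrier_vec n"
    using len unfolding c'_def by auto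
  ultimately have "S *\<^sub>v v = c'"
    using ST Sc by (simp add: assoc_mult_mat_vec[symmetric, of S n n])
  thus ?thesis using a unfolding c'_def by simp
qed

lemma rep_trace_split:
  assumes rep: "is_rep G n \<pi>" and sub: "is_subspace n W"
    and inv: "\<forall>g\<in>carrier G. \<forall>w\<in>W. \<pi> g *\<^sub>v w \<in> W"
    and W0: "W \<noteq> {0\<^sub>v n}" and Wn: "W \<noteq> carrier_vec n"
  obtains k A D where "0 < k" "k < n" "is_rep G k A" "is_rep G (n-k) D"
    "\<And>g. g \<in> carrier G \<Longrightarrow> mat_trace (\<pi> g) = mat_trace (A g) + mat_trace (D g)"
proof -
  interpret V: vec_space "TYPE(complex)" n .
  have "submodule class_ring W V.V"
    using sub vec_module unfolding is_subspace_def submodule_def by simp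
  then obtain ws k where len: "length ws = n" and wsc: "set ws \<subseteq> carrier_vec n" and k: "0 < k" "k < n"
    and spws: "V.span (set ws) = carrier_vec n" and spk: "V.span (set (take k ws)) = W"
    using V.proper_subspace_adapted_basis[OF _ W0 Wn] by blast
  define T where "T = mat_of_cols n ws"
  have Tc: "T \<in> carrier_mat n n" unfolding T_def using len by auto
  obtain S where Sc: "S \<in> carrier_mat n n" and TS: "T * S = 1\<^sub>m n" and ST: "S * T = 1\<^sub>m n"
    using V.spanning_cols_invertible[OF len wsc spws] unfolding T_def .
  define M where "M = (\<lambda>g. S * \<pi> g * T)"
  have repM: "is_rep G n M" and trM: "\<And>g. g \<in> carrier G \<Longrightarrow> mat_trace (M g) = mat_trace (\<pi> g)"
    unfolding M_def using rep_conjugate[OF rep Tc Sc TS ST] by auto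
  \<comment> \<open>M g is \<pi> g in the basis ws, whose first k vectors span the invariant subspace W\<close>
  have blk: "M g $$ (a,b) = 0" if g: "g \<in> carrier G" and a: "k \<le> a" "a < n" and b: "b < k" for g a b
  proof -
    have \<pi>c: "\<pi> g \<in> carrier_mat n n" using is_rep_carrier_mat[OF rep g] .
    have "take k ws ! b \<in> set (take k ws)" using b k len by (intro nth_mem) simp
    moreover have "set (take k ws) \<subseteq> carrier_vec n" using wsc set_take_subset by fast
    ultimately have "ws ! b \<in> W" using b V.in_own_span spk by auto
    hence "\<pi> g *\<^sub>v ws ! b \<in> V.span (set (take k ws))" using inv g spk by blast
    hence "(S *\<^sub>v (\<pi> g *\<^sub>v ws ! b)) $ a = 0"
      using V.coords_in_prefix_span_vanish[OF len wsc Sc ST[unfolded T_def] _ a] by blast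
    moreover have "col T b = ws ! b" unfolding T_def using b k len wsc by (auto intro!: col_mat_of_cols)
    hence "col (\<pi> g * T) b = \<pi> g *\<^sub>v ws ! b" using b k Tc \<pi>c by (simp add: mult_mat_vec_def)
    moreover have "M g $$ (a,b) = (S *\<^sub>v col (\<pi> g * T) b) $ a"
      unfolding M_def using a b k Sc Tc \<pi>c by simp
    ultimately show ?thesis by simp
  qed
  have kn: "k \<le> n" using k by simp
  show ?thesis
  proof (rule that[OF k])
    show "is_rep G k (\<lambda>g. mat k k (\<lambda>(a,b). M g $$ (a,b)))"
      by (rule upper_block_rep[OF repM kn blk])
    show "is_rep G (n-k) (\<lambda>g. mat (n-k) (n-k) (\<lambda>(a,b). M g $$ (a+k,b+k)))"
      by (rule lower_block_rep[OF repM kn blk])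
    fix g assume "g \<in> carrier G"
    thus "mat_trace (\<pi> g) = mat_trace (mat k k (\<lambda>(a,b). M g $$ (a,b)))
        + mat_trace (mat (n-k) (n-k) (\<lambda>(a,b). M g $$ (a+k,b+k)))"
      using trM mat_trace_split_blocks[OF is_rep_carrier_mat[OF repM] kn] by simp
  qed
qed

lemma trace_pairing_zero_on_reps:
  assumes irr: "\<And>n \<sigma>. irreducible_rep G n \<sigma> \<Longrightarrow> (\<Sum>x\<in>carrier G. h x * mat_trace (\<sigma> x)) = 0"
  shows "is_rep G n \<pi> \<Longrightarrow> (\<Sum>x\<in>carrier G. h x * mat_trace (\<pi> x)) = 0"
proof (induction n arbitrary: \<pi> rule: less_induct)
  case (less n)
  consider "irreducible_rep G n \<pi>" | "n = 0"
    | W where "is_subspace n W" "\<forall>g\<in>carrier G. \<forall>w\<in>W. \<pi> g *\<^sub>v w \<in> W"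
        "W \<noteq> {0\<^sub>v n}" "W \<noteq> carrier_vec n"
    using less.prems unfolding irreducible_rep_def by blast
  thus ?case
  proof cases
    case 1
    thus ?thesis by (rule irr)
  next
    case 2
    hence "mat_trace (\<pi> x) = 0" if "x \<in> carrier G" for x
      using is_rep_carrier_mat[OF less.prems that] unfolding mat_trace_def by simp
    thus ?thesis by simp
  next
    case (3 W)
    then obtain k A D where k: "0 < k" "k < n" and A: "is_rep G k A" and D: "is_rep G (n-k) D"
      and tr: "\<And>g. g \<in> carrier G \<Longrightarrow> mat_trace (\<pi> g) = mat_trace (A g) + mat_trace (D g)"
      using rep_trace_split[OF less.prems] by metis
    have "(\<Sum>x\<in>carrier G. h x * mat_trace (\<pi> x)) =
          (\<Sum>x\<in>carrier G. h x * mat_trace (A x)) + (\<Sum>x\<in>carrier G. h x * mat_trace (D x))"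
      using tr by (simp add: distrib_left sum.distrib)
    also have "\<dots> = 0" using less.IH[OF k(2) A] less.IH[OF _ D] k by simp
    finally show ?thesis .
  qed
qed

section \<open>Matrix coefficients span the functions on a finite group\<close>

definition left_regular_mat :: "('a, 'b) monoid_scheme \<Rightarrow> (nat \<Rightarrow> 'a) \<Rightarrow> 'a \<Rightarrow> complex mat" where
  "left_regular_mat G e x = mat (card (carrier G)) (card (carrier G))
     (\<lambda>(a,b). if e a = x \<otimes>\<^bsub>G\<^esub> e b then 1 else 0)"

lemma left_regular_mat_is_rep:
  fixes G (structure)
  assumes grp: "group G" and e: "bij_betw e {0..<card (carrier G)} (carrier G)"
  shows "is_rep G (card (carrier G)) (left_regular_mat G e)"
  unfolding is_rep_def
proof (intro conjI ballI)
  interpret group G by (rule grp)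
  let ?N = "card (carrier G)"
  have ein: "e a \<in> carrier G" if "a < ?N" for a using e that unfolding bij_betw_def by auto
  have einj: "e a = e b \<longleftrightarrow> a = b" if "a < ?N" "b < ?N" for a b
    using e that unfolding bij_betw_def inj_on_def by auto
  show "left_regular_mat G e \<one> = 1\<^sub>m ?N"
    unfolding left_regular_mat_def by (rule eq_matI) (auto simp: einj ein)
  fix x y assume x: "x \<in> carrier G" and y: "y \<in> carrier G"
  show "left_regular_mat G e (x \<otimes> y) = left_regular_mat G e x * left_regular_mat G e y"
  proof (rule eq_matI)
    fix a b assume "a < dim_row (left_regular_mat G e x * left_regular_mat G e y)"
      "b < dim_col (left_regular_mat G e x * left_regular_mat G e y)"
    hence a: "a < ?N" and b: "b < ?N" unfolding left_regular_mat_def by auto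
    obtain c0 where c0: "c0 < ?N" "e c0 = y \<otimes> e b"
      using e y ein[OF b] unfolding bij_betw_def by (metis atLeastLessThan_iff imageE m_closed)
    have "(left_regular_mat G e x * left_regular_mat G e y) $$ (a,b) =
        (\<Sum>c<?N. (if e a = x \<otimes> e c then 1 else 0) * (if e c = y \<otimes> e b then 1 else (0::complex)))"
      using a b unfolding left_regular_mat_def
      by (auto simp: scalar_prod_def lessThan_atLeast0 intro!: sum.cong)
    also have "\<dots> = (\<Sum>c<?N. if c = c0 then (if e a = x \<otimes> e c then 1 else 0) else 0)"
      using c0 einj[OF _ c0(1)] by (intro sum.cong) auto
    also have "\<dots> = left_regular_mat G e (x \<otimes> y) $$ (a,b)"
      using a b x y c0 ein[OF b] unfolding left_regular_mat_def by (simp add: m_assoc)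
    finally show "left_regular_mat G e (x \<otimes> y) $$ (a,b)
        = (left_regular_mat G e x * left_regular_mat G e y) $$ (a,b)" by simp
  qed (auto simp: left_regular_mat_def)
qed (auto simp: left_regular_mat_def)

lemma left_regular_mat_trace:
  fixes G (structure)
  assumes grp: "group G" and e: "bij_betw e {0..<card (carrier G)} (carrier G)" and x: "x \<in> carrier G"
  shows "mat_trace (left_regular_mat G e x) = (if x = \<one> then of_nat (card (carrier G)) else 0)"
proof -
  interpret group G by (rule grp)
  have "e a \<in> carrier G" if "a < card (carrier G)" for a using e that unfolding bij_betw_def by auto
  hence "mat_trace (left_regular_mat G e x) = (\<Sum>a<card (carrier G). if x = \<one> then 1 else 0)"
    unfolding mat_trace_def left_regular_mat_def using x by (intro sum.cong) auto
  thus ?thesis by simp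
qed

text \<open>The pairing is bilinear: f is not conjugated.\<close>

definition coeff_orthogonal ::
  "('a, 'b) monoid_scheme \<Rightarrow> ('a \<Rightarrow> complex) \<Rightarrow> nat \<Rightarrow> ('a \<Rightarrow> complex mat) \<Rightarrow> bool"
  where "coeff_orthogonal G f d \<rho> \<longleftrightarrow> (\<forall>a<d. \<forall>b<d. (\<Sum>x\<in>carrier G. f x * \<rho> x $$ (a,b)) = 0)"

definition autocorrelation :: "('a, 'b) monoid_scheme \<Rightarrow> ('a \<Rightarrow> complex) \<Rightarrow> 'a \<Rightarrow> complex"
  where "autocorrelation G f x = (\<Sum>z\<in>carrier G. cnj (f z) * f (z \<otimes>\<^bsub>G\<^esub> x))"

lemma coeff_orthogonal_left_translate:
  fixes G (structure)
  assumes grp: "group G" and rep: "is_rep G d \<rho>" and orth: "coeff_orthogonal G f d \<rho>"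
    and z: "z \<in> carrier G"
  shows "coeff_orthogonal G (\<lambda>x. f (z \<otimes> x)) d \<rho>"
  unfolding coeff_orthogonal_def
proof (intro allI impI)
  interpret group G by (rule grp)
  fix a b assume a: "a < d" and b: "b < d"
  have iz: "inv z \<in> carrier G" using z by simp
  have bij: "bij_betw (\<lambda>w. inv z \<otimes> w) (carrier G) (carrier G)"
    unfolding bij_betw_def using inj_on_cmult[OF iz] surj_const_mult[OF iz] by simp
  have "(\<Sum>x\<in>carrier G. f (z \<otimes> x) * \<rho> x $$ (a,b)) =
        (\<Sum>w\<in>carrier G. f (z \<otimes> (inv z \<otimes> w)) * \<rho> (inv z \<otimes> w) $$ (a,b))"
    using sum.reindex_bij_betw[OF bij, of "\<lambda>x. f (z \<otimes> x) * \<rho> x $$ (a,b)"] by simp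
  also have "\<dots> = (\<Sum>w\<in>carrier G. \<Sum>c<d. \<rho> (inv z) $$ (a,c) * (f w * \<rho> w $$ (c,b)))"
  proof (rule sum.cong[OF refl])
    fix w assume w: "w \<in> carrier G"
    have "\<rho> (inv z \<otimes> w) $$ (a,b) = (\<Sum>c<d. \<rho> (inv z) $$ (a,c) * \<rho> w $$ (c,b))"
      using is_rep_mult[OF rep iz w] a b
        mat_mult_index_sum[OF is_rep_carrier_mat[OF rep iz] is_rep_carrier_mat[OF rep w]] by simp
    moreover have "z \<otimes> (inv z \<otimes> w) = w" using z w by (simp add: m_assoc[symmetric])
    ultimately show "f (z \<otimes> (inv z \<otimes> w)) * \<rho> (inv z \<otimes> w) $$ (a,b) =
        (\<Sum>c<d. \<rho> (inv z) $$ (a,c) * (f w * \<rho> w $$ (c,b)))"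
      by (simp add: sum_distrib_left mult.left_commute)
  qed
  also have "\<dots> = (\<Sum>c<d. \<rho> (inv z) $$ (a,c) * (\<Sum>w\<in>carrier G. f w * \<rho> w $$ (c,b)))"
    by (subst sum.swap) (simp add: sum_distrib_left)
  also have "\<dots> = 0" using orth b unfolding coeff_orthogonal_def by simp
  finally show "(\<Sum>x\<in>carrier G. f (z \<otimes> x) * \<rho> x $$ (a,b)) = 0" .
qed

lemma coeff_orthogonal_autocorrelation:
  assumes grp: "group G" and rep: "is_rep G d \<rho>" and orth: "coeff_orthogonal G f d \<rho>"
  shows "coeff_orthogonal G (autocorrelation G f) d \<rho>"
  unfolding coeff_orthogonal_def
proof (intro allI impI)
  fix a b assume a: "a < d" and b: "b < d"
  have "(\<Sum>x\<in>carrier G. autocorrelation G f x * \<rho> x $$ (a,b)) =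
        (\<Sum>z\<in>carrier G. cnj (f z) * (\<Sum>x\<in>carrier G. f (z \<otimes>\<^bsub>G\<^esub> x) * \<rho> x $$ (a,b)))"
    unfolding autocorrelation_def sum_distrib_right sum_distrib_left mult.assoc
    by (rule sum.swap)
  also have "\<dots> = 0"
    using coeff_orthogonal_left_translate[OF grp rep orth] a b unfolding coeff_orthogonal_def by simp
  finally show "(\<Sum>x\<in>carrier G. autocorrelation G f x * \<rho> x $$ (a,b)) = 0" .
qed

lemma autocorrelation_one:
  assumes "group G"
  shows "autocorrelation G f \<one>\<^bsub>G\<^esub> = of_real (\<Sum>z\<in>carrier G. (cmod (f z))\<^sup>2)"
proof -
  have "autocorrelation G f \<one>\<^bsub>G\<^esub> = (\<Sum>z\<in>carrier G. of_real ((cmod (f z))\<^sup>2))"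
    unfolding autocorrelation_def
  proof (rule sum.cong[OF refl])
    fix z assume "z \<in> carrier G"
    hence "z \<otimes>\<^bsub>G\<^esub> \<one>\<^bsub>G\<^esub> = z" using assms by (simp add: group.is_monoid)
    thus "cnj (f z) * f (z \<otimes>\<^bsub>G\<^esub> \<one>\<^bsub>G\<^esub>) = of_real ((cmod (f z))\<^sup>2)"
      using complex_norm_square[of "f z"] by (simp only: mult.commute)
  qed
  thus ?thesis by simp
qed

lemma trace_pairing_zero_of_coeff_orthogonal:
  assumes "is_rep G d \<rho>" "coeff_orthogonal G h d \<rho>"
  shows "(\<Sum>x\<in>carrier G. h x * mat_trace (\<rho> x)) = 0"
proof -
  have "(\<Sum>x\<in>carrier G. h x * mat_trace (\<rho> x)) = (\<Sum>x\<in>carrier G. \<Sum>a<d. h x * \<rho> x $$ (a,a))"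
    using is_rep_carrier_mat[OF assms(1)] unfolding mat_trace_def
    by (intro sum.cong) (auto simp: sum_distrib_left)
  also have "\<dots> = (\<Sum>a<d. \<Sum>x\<in>carrier G. h x * \<rho> x $$ (a,a))" by (rule sum.swap)
  also have "\<dots> = 0" using assms(2) unfolding coeff_orthogonal_def by simp
  finally show ?thesis .
qed

lemma zero_if_coeff_orthogonal_to_irreducibles:
  fixes G (structure)
  assumes grp: "group G" and fin: "finite (carrier G)"
    and reps: "\<And>i. i \<in> I \<Longrightarrow> is_rep G (deg i) (\<rho> i)"
    and complete: "\<And>n \<sigma>. irreducible_rep G n \<sigma> \<Longrightarrow> \<exists>i\<in>I. character_of G \<sigma> = character_of G (\<rho> i)"
    and orth: "\<And>i. i \<in> I \<Longrightarrow> coeff_orthogonal G f (deg i) (\<rho> i)"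
  shows "\<forall>x\<in>carrier G. f x = 0"
proof -
  interpret group G by (rule grp)
  let ?h = "autocorrelation G f"
  have "(\<Sum>x\<in>carrier G. ?h x * mat_trace (\<sigma> x)) = 0" if irr: "irreducible_rep G n \<sigma>" for n \<sigma>
  proof -
    obtain i where i: "i \<in> I" and ch: "character_of G \<sigma> = character_of G (\<rho> i)"
      using complete[OF irr] by blast
    have "mat_trace (\<sigma> x) = mat_trace (\<rho> i x)" if "x \<in> carrier G" for x
      using fun_cong[OF ch, of x] that unfolding character_of_def by simp
    hence "(\<Sum>x\<in>carrier G. ?h x * mat_trace (\<sigma> x)) = (\<Sum>x\<in>carrier G. ?h x * mat_trace (\<rho> i x))"
      by simp
    also have "\<dots> = 0"
      using trace_pairing_zero_of_coeff_orthogonal[OF reps[OF i]]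
        coeff_orthogonal_autocorrelation[OF grp reps[OF i] orth[OF i]] by blast
    finally show ?thesis .
  qed
  hence pairing: "\<And>n \<pi>. is_rep G n \<pi> \<Longrightarrow> (\<Sum>x\<in>carrier G. ?h x * mat_trace (\<pi> x)) = 0"
    by (rule trace_pairing_zero_on_reps)
  obtain e where e: "bij_betw e {0..<card (carrier G)} (carrier G)"
    using ex_bij_betw_nat_finite[OF fin] by blast
  \<comment> \<open>pairing with the regular character picks out the value at the identity\<close>
  have "0 = (\<Sum>x\<in>carrier G. ?h x * mat_trace (left_regular_mat G e x))"
    using pairing[OF left_regular_mat_is_rep[OF grp e]] by simp
  also have "\<dots> = (\<Sum>x\<in>carrier G. if x = \<one> then ?h x * of_nat (card (carrier G)) else 0)"
    using left_regular_mat_trace[OF grp e] by (intro sum.cong) auto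
  also have "\<dots> = ?h \<one> * of_nat (card (carrier G))" using fin by simp
  finally have "?h \<one> = 0" using fin by (auto simp: card_eq_0_iff)
  hence "(\<Sum>z\<in>carrier G. (cmod (f z))\<^sup>2) = 0"
    using autocorrelation_one[OF grp, of f] of_real_eq_0_iff by metis
  hence "\<forall>z\<in>carrier G. (cmod (f z))\<^sup>2 = 0" using fin by (subst (asm) sum_nonneg_eq_0_iff) auto
  thus ?thesis by simp
qed

lemma card_lt_imp_nontrivial_relation:
  fixes F :: "'x \<Rightarrow> 'i \<Rightarrow> complex"
  assumes finX: "finite X" and finI: "finite I" and lt: "card I < card X"
  obtains f where "\<forall>j\<in>I. (\<Sum>x\<in>X. f x * F x j) = 0" "\<exists>x\<in>X. f x \<noteq> 0"
proof -
  let ?p = "card X" and ?q = "card I"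
  obtain ex where ex: "bij_betw ex {0..<?p} X" using ex_bij_betw_nat_finite[OF finX] by blast
  obtain ei where ei: "bij_betw ei {0..<?q} I" using ex_bij_betw_nat_finite[OF finI] by blast
  \<comment> \<open>the zero row q makes B singular, and a kernel vector of B is a nontrivial relation\<close>
  define B where "B = mat\<^sub>r ?p ?p (\<lambda>r. if r = ?q then 0\<^sub>v ?p
    else vec ?p (\<lambda>c. if r < ?q then F (ex c) (ei r) else 0))"
  have Bc: "B \<in> carrier_mat ?p ?p" unfolding B_def by auto
  have "det B = 0" unfolding B_def by (rule det_row_0) (use lt in auto)
  then obtain v where v: "v \<in> carrier_vec ?p" "v \<noteq> 0\<^sub>v ?p" "B *\<^sub>v v = 0\<^sub>v ?p"
    using det_0_iff_vec_prod_zero[OF Bc] by blast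
  define f where "f = (\<lambda>x. v $ (the_inv_into {0..<?p} ex x))"
  have rel: "\<forall>j\<in>I. (\<Sum>x\<in>X. f x * F x j) = 0"
  proof
    fix j assume "j \<in> I"
    then obtain r where r: "r < ?q" "ei r = j" using ei unfolding bij_betw_def by force
    have "(\<Sum>x\<in>X. f x * F x j) = (\<Sum>c\<in>{0..<?p}. f (ex c) * F (ex c) j)"
      using ex by (simp add: sum.reindex_bij_betw[symmetric])
    also have "\<dots> = (\<Sum>c\<in>{0..<?p}. v $ c * F (ex c) j)"
      using ex unfolding f_def bij_betw_def by (intro sum.cong) (auto simp: the_inv_into_f_f)
    also have "\<dots> = (B *\<^sub>v v) $ r"
      using r lt v(1) unfolding B_def by (auto simp: scalar_prod_def mult.commute intro!: sum.cong)
    also have "\<dots> = 0" using v(3) r lt by simp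
    finally show "(\<Sum>x\<in>X. f x * F x j) = 0" .
  qed
  have "\<exists>x\<in>X. f x \<noteq> 0"
  proof (rule ccontr)
    assume "\<not> (\<exists>x\<in>X. f x \<noteq> 0)"
    hence f0: "\<forall>x\<in>X. f x = 0" by blast
    have "v = 0\<^sub>v ?p"
    proof (rule eq_vecI)
      fix i assume "i < dim_vec (0\<^sub>v ?p)"
      hence i: "i < ?p" by simp
      hence "ex i \<in> X" "f (ex i) = v $ i"
        using ex unfolding bij_betw_def f_def by (auto simp: the_inv_into_f_f)
      thus "v $ i = 0\<^sub>v ?p $ i" using f0 i by simp
    qed (use v in auto)
    thus False using v by simp
  qed
  with rel show ?thesis by (rule that)
qed

lemma card_carrier_le_sum_degree_squares:
  fixes G (structure)
  assumes grp: "group G" and fin: "finite (carrier G)" and finI: "finite I"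
    and reps: "\<And>i. i \<in> I \<Longrightarrow> is_rep G (deg i) (\<rho> i)"
    and complete: "\<And>n \<sigma>. irreducible_rep G n \<sigma> \<Longrightarrow> \<exists>i\<in>I. character_of G \<sigma> = character_of G (\<rho> i)"
  shows "card (carrier G) \<le> (\<Sum>i\<in>I. deg i ^ 2)"
proof -
  define J where "J = Sigma I (\<lambda>i. {..<deg i} \<times> {..<deg i})"
  have "card (carrier G) \<le> card J"
  proof (rule ccontr)
    assume "\<not> card (carrier G) \<le> card J"
    hence lt: "card J < card (carrier G)" by simp
    have finJ: "finite J" unfolding J_def using finI by auto
    obtain f
      where rel: "\<forall>j\<in>J. (\<Sum>x\<in>carrier G. f x * (case j of (i,a,b) \<Rightarrow> \<rho> i x $$ (a,b))) = 0"
        and nonzero: "\<exists>x\<in>carrier G. f x \<noteq> 0"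
      using card_lt_imp_nontrivial_relation[OF fin finJ lt, where F = "\<lambda>x (i,a,b). \<rho> i x $$ (a,b)"]
      by blast
    have orth: "coeff_orthogonal G f (deg i) (\<rho> i)" if "i \<in> I" for i
      using rel that unfolding coeff_orthogonal_def J_def by auto
    have "\<forall>x\<in>carrier G. f x = 0"
      by (rule zero_if_coeff_orthogonal_to_irreducibles[OF grp fin reps complete orth])
    thus False using nonzero by blast
  qed
  also have "card J = (\<Sum>i\<in>I. deg i ^ 2)"
    unfolding J_def using finI by (simp add: card_cartesian_product power2_eq_square)
  finally show ?thesis .
qed

lemma enumerated_irr_chars_degrees:
  fixes G (structure)
  assumes grp: "group G" and fin: "finite (carrier G)" and en: "enumerates_irr_chars G t \<phi>"
  obtains deg where "\<And>i. i < t \<Longrightarrow> \<phi> i \<one> = of_nat (deg i) \<and> 0 < deg i"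
    "card (carrier G) \<le> (\<Sum>i<t. deg i ^ 2)"
proof -
  have "\<forall>i<t. \<exists>n \<rho>. irreducible_rep G n \<rho> \<and> \<phi> i = character_of G \<rho>"
    using en unfolding enumerates_irr_chars_def irr_char_def by blast
  then obtain deg \<rho> where dr: "\<And>i. i < t \<Longrightarrow> irreducible_rep G (deg i) (\<rho> i) \<and> \<phi> i = character_of G (\<rho> i)"
    by metis
  have reps: "\<And>i. i \<in> {..<t} \<Longrightarrow> is_rep G (deg i) (\<rho> i)"
    using dr unfolding irreducible_rep_def by blast
  have complete: "\<exists>i\<in>{..<t}. character_of G \<sigma> = character_of G (\<rho> i)"
    if "irreducible_rep G n \<sigma>" for n \<sigma>
  proof -
    have "character_of G \<sigma> \<in> \<phi> ` {..<t}"
      using that en unfolding enumerates_irr_chars_def irr_char_def by blast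
    thus ?thesis using dr by auto
  qed
  have "card (carrier G) \<le> (\<Sum>i<t. deg i ^ 2)"
    by (rule card_carrier_le_sum_degree_squares[OF grp fin finite_lessThan reps complete])
  moreover have "\<phi> i \<one> = of_nat (deg i) \<and> 0 < deg i" if "i < t" for i
    using dr[OF that] character_of_one[OF grp] unfolding irreducible_rep_def by auto
  ultimately show ?thesis using that by blast
qed

section \<open>Balanced covers\<close>

definition wcq_structure_const ::
  "('a, 'b) monoid_scheme \<Rightarrow> (nat \<Rightarrow> 'a \<Rightarrow> complex) \<Rightarrow> nat \<Rightarrow> nat \<Rightarrow> nat \<Rightarrow> complex" where
  "wcq_structure_const G \<phi> i j k =
     \<phi> i \<one>\<^bsub>G\<^esub> * \<phi> j \<one>\<^bsub>G\<^esub> * char_scalar G (\<lambda>g. \<phi> i g * \<phi> j g) (\<phi> k) / \<phi> k \<one>\<^bsub>G\<^esub>"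

definition wcq_partition ::
  "('a, 'b) monoid_scheme \<Rightarrow> nat \<Rightarrow> (nat \<Rightarrow> 'a \<Rightarrow> complex) \<Rightarrow> 'q set \<Rightarrow> ('q \<Rightarrow> 'q \<Rightarrow> 'q)
     \<Rightarrow> (nat \<Rightarrow> 'q set) \<Rightarrow> bool" where
  "wcq_partition G t \<phi> Q m S \<longleftrightarrow>
     (\<forall>i<t. S i \<subseteq> Q) \<and>
     (\<forall>i<t. \<forall>j<t. i \<noteq> j \<longrightarrow> S i \<inter> S j = {}) \<and>
     (\<forall>i<t. of_nat (card (S i)) = (\<phi> i \<one>\<^bsub>G\<^esub>)\<^sup>2) \<and>
     (\<forall>i<t. \<forall>j<t. \<forall>q. of_nat (prod_mult m (S i) (S j) q) =
        (\<Sum>k<t. wcq_structure_const G \<phi> i j k * (if q \<in> S k then 1 else 0)))"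

lemma wcq_partition_cong:
  assumes "\<And>i. i < t \<Longrightarrow> S i = S' i"
  shows "wcq_partition G t \<phi> Q m S \<longleftrightarrow> wcq_partition G t \<phi> Q m S'"
proof -
  have "(\<Sum>k<t. c k * (if q \<in> S k then 1 else 0)) = (\<Sum>k<t. c k * (if q \<in> S' k then 1 else 0))"
    for c :: "nat \<Rightarrow> complex" and q
    using assms by (intro sum.cong) auto
  thus ?thesis using assms unfolding wcq_partition_def by auto
qed

lemma wcq_alpha_eq_structure_const:
  assumes "\<phi> k \<one>\<^bsub>G\<^esub> \<noteq> 0"
  shows "wcq_alpha G (\<phi> i) (\<phi> j) (\<phi> k) = (\<phi> k \<one>\<^bsub>G\<^esub>)\<^sup>2 * wcq_structure_const G \<phi> i j k"
  using assms unfolding wcq_alpha_def wcq_structure_const_def by (simp add: field_simps power2_eq_square)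

abbreviation fibre :: "'q set \<Rightarrow> ('q \<Rightarrow> 'c) \<Rightarrow> 'c \<Rightarrow> 'q set" where
  "fibre Q f y \<equiv> {q\<in>Q. f q = y}"

lemma card_pairs_with_label:
  assumes closed: "\<And>a b. a \<in> Q \<Longrightarrow> b \<in> Q \<Longrightarrow> m a b \<in> Q" and finQ: "finite Q"
    and AB: "A \<subseteq> Q" "B \<subseteq> Q"
  shows "card {(a,b) \<in> A \<times> B. f (m a b) = y} = (\<Sum>q\<in>fibre Q f y. prod_mult m A B q)"
proof -
  have "{(a,b) \<in> A \<times> B. f (m a b) = y} = (\<Union>q\<in>fibre Q f y. {(a,b) \<in> A \<times> B. m a b = q})"
    using closed AB by blast
  moreover have "finite (A \<times> B)" using AB finQ finite_subset by blast
  ultimately show ?thesis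
    unfolding prod_mult_def using finQ
    by (simp only:) (intro card_UN_disjoint, auto intro: finite_subset[of _ "A \<times> B"])
qed

lemma prod_mult_outside:
  assumes "\<And>a b. a \<in> Q \<Longrightarrow> b \<in> Q \<Longrightarrow> m a b \<in> Q" "A \<subseteq> Q" "B \<subseteq> Q" "q \<notin> Q"
  shows "prod_mult m A B q = 0"
  using assms unfolding prod_mult_def by (auto simp: card_eq_0_iff)

lemma sum_indicator_unique:
  fixes c :: "nat \<Rightarrow> 'c :: semiring_1"
  assumes "k0 < t" "\<And>k. k < t \<Longrightarrow> q \<in> S k \<longleftrightarrow> k = k0"
  shows "(\<Sum>k<t. c k * (if q \<in> S k then 1 else 0)) = c k0"
proof -
  have "(\<Sum>k<t. c k * (if q \<in> S k then 1 else 0)) = (\<Sum>k<t. if k = k0 then c k else 0)"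
    using assms(2) by (intro sum.cong) auto
  thus ?thesis using assms(1) by simp
qed

context
  fixes G :: "('a, 'b) monoid_scheme" and t :: nat and \<phi> :: "nat \<Rightarrow> 'a \<Rightarrow> complex"
    and Q :: "'q set" and m :: "'q \<Rightarrow> 'q \<Rightarrow> 'q" and f :: "'q \<Rightarrow> 'a \<Rightarrow> complex"
  assumes inj: "inj_on \<phi> {..<t}" and nz: "\<And>i. i < t \<Longrightarrow> \<phi> i \<one>\<^bsub>G\<^esub> \<noteq> 0"
    and closed: "\<And>a b. a \<in> Q \<Longrightarrow> b \<in> Q \<Longrightarrow> m a b \<in> Q" and finQ: "finite Q"
begin

lemma fibres_disjoint: "i < t \<Longrightarrow> j < t \<Longrightarrow> i \<noteq> j \<Longrightarrow> fibre Q f (\<phi> i) \<inter> fibre Q f (\<phi> j) = {}"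
  using inj unfolding inj_on_def by auto

lemma fibre_indicator_sum:
  assumes "k < t" "q \<in> fibre Q f (\<phi> k)"
  shows "(\<Sum>k'<t. c k' * (if q \<in> fibre Q f (\<phi> k') then 1 else 0)) = (c k :: complex)"
  using assms fibres_disjoint by (intro sum_indicator_unique) blast+

lemma fibre_alpha_iff:
  assumes ijk: "i < t" "j < t" "k < t"
    and card: "of_nat (card (fibre Q f (\<phi> k))) = (\<phi> k \<one>\<^bsub>G\<^esub>)\<^sup>2"
    and const: "\<And>q. q \<in> fibre Q f (\<phi> k) \<Longrightarrow> of_nat (prod_mult m (fibre Q f (\<phi> i)) (fibre Q f (\<phi> j)) q) = c"
  shows "of_nat (card {(a,b) \<in> fibre Q f (\<phi> i) \<times> fibre Q f (\<phi> j). f (m a b) = \<phi> k})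
      = wcq_alpha G (\<phi> i) (\<phi> j) (\<phi> k) \<longleftrightarrow> c = wcq_structure_const G \<phi> i j k"
proof -
  have "(of_nat (card {(a,b) \<in> fibre Q f (\<phi> i) \<times> fibre Q f (\<phi> j). f (m a b) = \<phi> k}) :: complex)
      = (\<Sum>q\<in>fibre Q f (\<phi> k). of_nat (prod_mult m (fibre Q f (\<phi> i)) (fibre Q f (\<phi> j)) q))"
    by (subst card_pairs_with_label[OF closed finQ]) auto
  also have "\<dots> = (\<phi> k \<one>\<^bsub>G\<^esub>)\<^sup>2 * c" using const card by simp
  finally show ?thesis
    using nz[OF ijk(3)] wcq_alpha_eq_structure_const[where \<phi> = \<phi>, OF nz[OF ijk(3)]] by simp
qed

lemma balanced_cover_imp_fibre_partition:
  assumes bal: "wcq_balanced_cover G t \<phi> Q m f"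
  shows "wcq_partition G t \<phi> Q m (\<lambda>i. fibre Q f (\<phi> i))"
proof -
  let ?F = "\<lambda>i. fibre Q f (\<phi> i)"
  have card: "\<And>i. i < t \<Longrightarrow> of_nat (card (?F i)) = (\<phi> i \<one>\<^bsub>G\<^esub>)\<^sup>2"
    and alpha: "\<And>i j k. i < t \<Longrightarrow> j < t \<Longrightarrow> k < t \<Longrightarrow>
      of_nat (card {(a,b) \<in> ?F i \<times> ?F j. f (m a b) = \<phi> k}) = wcq_alpha G (\<phi> i) (\<phi> j) (\<phi> k)"
    and balanced: "\<And>i j q q'. i < t \<Longrightarrow> j < t \<Longrightarrow> q \<in> Q \<Longrightarrow> q' \<in> Q \<Longrightarrow> f q = f q' \<Longrightarrow>
      prod_mult m (?F i) (?F j) q = prod_mult m (?F i) (?F j) q'"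
    using bal unfolding wcq_balanced_cover_def wcq_cover_def wcq_weight_def prod_mult_def by blast+
  have range: "f ` Q \<subseteq> \<phi> ` {..<t}"
    using bal unfolding wcq_balanced_cover_def wcq_cover_def by blast
  have "of_nat (prod_mult m (?F i) (?F j) q) =
      (\<Sum>k<t. wcq_structure_const G \<phi> i j k * (if q \<in> ?F k then 1 else 0))"
    if ij: "i < t" "j < t" for i j q
  proof (cases "q \<in> Q")
    case True
    then obtain k where k: "k < t" "q \<in> ?F k" using range by auto
    have "of_nat (prod_mult m (?F i) (?F j) q') = (of_nat (prod_mult m (?F i) (?F j) q) :: complex)"
      if "q' \<in> ?F k" for q'
      using balanced[OF ij] that k by auto
    hence "of_nat (prod_mult m (?F i) (?F j) q) = wcq_structure_const G \<phi> i j k"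
      using fibre_alpha_iff[OF ij k(1) card[OF k(1)]] alpha[OF ij k(1)] by blast
    thus ?thesis using fibre_indicator_sum[OF k] by simp
  next
    case False
    moreover have "prod_mult m (?F i) (?F j) q = 0" using False closed by (intro prod_mult_outside) auto
    ultimately show ?thesis by simp
  qed
  thus ?thesis using card fibres_disjoint unfolding wcq_partition_def by auto
qed

lemma fibre_partition_imp_balanced_cover:
  assumes range: "f ` Q \<subseteq> \<phi> ` {..<t}"
    and part: "wcq_partition G t \<phi> Q m (\<lambda>i. fibre Q f (\<phi> i))"
  shows "wcq_balanced_cover G t \<phi> Q m f"
proof -
  let ?F = "\<lambda>i. fibre Q f (\<phi> i)"
  have card: "\<And>i. i < t \<Longrightarrow> of_nat (card (?F i)) = (\<phi> i \<one>\<^bsub>G\<^esub>)\<^sup>2"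
    and prod: "\<And>i j q. i < t \<Longrightarrow> j < t \<Longrightarrow> of_nat (prod_mult m (?F i) (?F j) q) =
        (\<Sum>k<t. wcq_structure_const G \<phi> i j k * (if q \<in> ?F k then 1 else 0))"
    using part unfolding wcq_partition_def by blast+
  have const: "of_nat (prod_mult m (?F i) (?F j) q) = wcq_structure_const G \<phi> i j k"
    if "i < t" "j < t" "k < t" "q \<in> ?F k" for i j k q
    using prod[OF that(1,2)] fibre_indicator_sum[OF that(3,4)] by simp
  have "\<phi> ` {..<t} \<subseteq> f ` Q"
  proof
    fix x assume "x \<in> \<phi> ` {..<t}"
    then obtain i where i: "i < t" "x = \<phi> i" by blast
    have "card (?F i) \<noteq> 0" using card[OF i(1)] nz[OF i(1)] by (metis of_nat_0 zero_eq_power2)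
    then obtain q where "q \<in> ?F i" by (metis card.empty ex_in_conv)
    hence "q \<in> Q" "f q = x" using i(2) by auto
    thus "x \<in> f ` Q" by (metis image_eqI)
  qed
  hence "f ` Q = \<phi> ` {..<t}" using range by blast
  moreover have "of_nat (card {(a,b) \<in> ?F i \<times> ?F j. f (m a b) = \<phi> k}) = wcq_alpha G (\<phi> i) (\<phi> j) (\<phi> k)"
    if ijk: "i < t" "j < t" "k < t" for i j k
    using fibre_alpha_iff[OF ijk card[OF ijk(3)] const[OF ijk]] by blast
  moreover have "prod_mult m (?F i) (?F j) q = prod_mult m (?F i) (?F j) q'"
    if ij: "i < t" "j < t" and qq': "q \<in> Q" "q' \<in> Q" "f q = f q'" for i j q q'
  proof -
    obtain k where k: "k < t" "f q = \<phi> k" using range qq'(1) by auto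
    hence "(of_nat (prod_mult m (?F i) (?F j) q) :: complex) = of_nat (prod_mult m (?F i) (?F j) q')"
      using const[OF ij k(1)] qq' by simp
    thus ?thesis by (simp only: of_nat_eq_iff)
  qed
  ultimately show ?thesis
    using card unfolding wcq_balanced_cover_def wcq_cover_def wcq_weight_def prod_mult_def by blast
qed

end

lemma wcq_partition_covers:
  assumes finQ: "finite Q" and part: "wcq_partition G t \<phi> Q m S"
    and deg: "\<And>i. i < t \<Longrightarrow> \<phi> i \<one>\<^bsub>G\<^esub> = of_nat (deg i)"
    and bound: "card Q \<le> (\<Sum>i<t. deg i ^ 2)"
  shows "(\<Union>i<t. S i) = Q"
proof (rule card_seteq[OF finQ])
  have SQ: "\<And>i. i < t \<Longrightarrow> S i \<subseteq> Q" and disj: "\<And>i j. i < t \<Longrightarrow> j < t \<Longrightarrow> i \<noteq> j \<Longrightarrow> S i \<inter> S j = {}"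
    and card: "\<And>i. i < t \<Longrightarrow> of_nat (card (S i)) = (\<phi> i \<one>\<^bsub>G\<^esub>)\<^sup>2"
    using part unfolding wcq_partition_def by blast+
  show "(\<Union>i<t. S i) \<subseteq> Q" using SQ by blast
  have "card (S i) = deg i ^ 2" if "i < t" for i
    using card[OF that] deg[OF that] of_nat_eq_iff by (metis of_nat_power)
  moreover have "finite (S i)" if "i < t" for i using SQ[OF that] finQ by (rule finite_subset)
  ultimately have "card (\<Union>i<t. S i) = (\<Sum>i<t. deg i ^ 2)"
    using disj by (subst card_UN_disjoint) auto
  thus "card Q \<le> card (\<Union>i<t. S i)" using bound by simp
qed

lemma partition_labelling:
  assumes inj: "inj_on \<phi> {..<t}"
    and disj: "\<forall>i<t. \<forall>j<t. i \<noteq> j \<longrightarrow> S i \<inter> S j = {}"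
    and covers: "(\<Union>i<t. S i) = Q"
  shows "\<exists>f. f ` Q \<subseteq> \<phi> ` {..<t} \<and> (\<forall>i<t. fibre Q f (\<phi> i) = S i)"
proof -
  define f where "f q = \<phi> (THE i. i < t \<and> q \<in> S i)" for q
  have f_eq: "f q = \<phi> k" if "k < t" "q \<in> S k" for q k
    unfolding f_def using disj that by (metis (no_types, lifting) disjoint_iff the_equality)
  have "fibre Q f (\<phi> i) = S i" if i: "i < t" for i
  proof
    show "S i \<subseteq> fibre Q f (\<phi> i)" using covers f_eq[OF i] i by auto
    show "fibre Q f (\<phi> i) \<subseteq> S i"
    proof
      fix q assume q: "q \<in> fibre Q f (\<phi> i)"
      then obtain k where "k < t" "q \<in> S k" using covers by blast
      thus "q \<in> S i" using q f_eq inj i unfolding inj_on_def by auto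
    qed
  qed
  moreover have "f ` Q \<subseteq> \<phi> ` {..<t}" using covers f_eq by auto
  ultimately show ?thesis by blast
qed

lemma covering_wcq_partition_imp_balanced_cover:
  assumes inj: "inj_on \<phi> {..<t}" and nz: "\<And>i. i < t \<Longrightarrow> \<phi> i \<one>\<^bsub>G\<^esub> \<noteq> 0"
    and closed: "\<And>a b. a \<in> Q \<Longrightarrow> b \<in> Q \<Longrightarrow> m a b \<in> Q" and finQ: "finite Q"
    and part: "wcq_partition G t \<phi> Q m S" and covers: "(\<Union>i<t. S i) = Q"
  shows "\<exists>f. wcq_balanced_cover G t \<phi> Q m f"
proof -
  have "\<forall>i<t. \<forall>j<t. i \<noteq> j \<longrightarrow> S i \<inter> S j = {}"
    using part unfolding wcq_partition_def by blast
  then obtain f where range: "f ` Q \<subseteq> \<phi> ` {..<t}" and fib: "\<And>i. i < t \<Longrightarrow> fibre Q f (\<phi> i) = S i"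
    using partition_labelling[OF inj _ covers] by blast
  have "wcq_partition G t \<phi> Q m (\<lambda>i. fibre Q f (\<phi> i)) \<longleftrightarrow> wcq_partition G t \<phi> Q m S"
    by (rule wcq_partition_cong) (rule fib)
  with part have fibre_part: "wcq_partition G t \<phi> Q m (\<lambda>i. fibre Q f (\<phi> i))" by simp
  have "wcq_balanced_cover G t \<phi> Q m f"
    by (rule fibre_partition_imp_balanced_cover[OF inj nz closed finQ range fibre_part])
  thus ?thesis by blast
qed

theorem mainTheorem3:
  fixes G :: "('a, 'b) monoid_scheme"
    and t :: nat and \<phi> :: "nat \<Rightarrow> 'a \<Rightarrow> complex"
    and Q :: "'q set" and m :: "'q \<Rightarrow> 'q \<Rightarrow> 'q"
  assumes "group G" and "finite (carrier G)"
    and "enumerates_irr_chars G t \<phi>"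
    and "quasigroup Q m" and "finite Q" and "card Q = card (carrier G)"
  shows "(\<exists>f. wcq_balanced_cover G t \<phi> Q m f) \<longleftrightarrow>
    (\<exists>S :: nat \<Rightarrow> 'q set.
       (\<forall>i<t. S i \<subseteq> Q) \<and>
       (\<forall>i<t. \<forall>j<t. i \<noteq> j \<longrightarrow> S i \<inter> S j = {}) \<and>
       (\<forall>i<t. of_nat (card (S i)) = (\<phi> i \<one>\<^bsub>G\<^esub>)\<^sup>2) \<and>
       (\<forall>i<t. \<forall>j<t. \<forall>q. of_nat (prod_mult m (S i) (S j) q) =
          (\<Sum>k<t. (\<phi> i \<one>\<^bsub>G\<^esub> * \<phi> j \<one>\<^bsub>G\<^esub> *
                    char_scalar G (\<lambda>g. \<phi> i g * \<phi> j g) (\<phi> k) / \<phi> k \<one>\<^bsub>G\<^esub>)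
                  * (if q \<in> S k then 1 else 0))))"
proof -
  have inj: "inj_on \<phi> {..<t}" using assms(3) unfolding enumerates_irr_chars_def by blast
  have closed: "\<And>a b. a \<in> Q \<Longrightarrow> b \<in> Q \<Longrightarrow> m a b \<in> Q" using assms(4) unfolding quasigroup_def by blast
  obtain deg where deg: "\<And>i. i < t \<Longrightarrow> \<phi> i \<one>\<^bsub>G\<^esub> = of_nat (deg i) \<and> 0 < deg i"
    and bound: "card (carrier G) \<le> (\<Sum>i<t. deg i ^ 2)"
    using enumerated_irr_chars_degrees[OF assms(1-3)] by blast
  have nz: "\<And>i. i < t \<Longrightarrow> \<phi> i \<one>\<^bsub>G\<^esub> \<noteq> 0" using deg by simp
  have "(\<exists>f. wcq_balanced_cover G t \<phi> Q m f) \<longleftrightarrow> (\<exists>S. wcq_partition G t \<phi> Q m S)"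
  proof
    assume "\<exists>f. wcq_balanced_cover G t \<phi> Q m f"
    then obtain f where bal: "wcq_balanced_cover G t \<phi> Q m f" ..
    have "wcq_partition G t \<phi> Q m (\<lambda>i. fibre Q f (\<phi> i))"
      by (rule balanced_cover_imp_fibre_partition[OF inj _ _ assms(5) bal]) (use nz closed in auto)
    thus "\<exists>S. wcq_partition G t \<phi> Q m S" by blast
  next
    assume "\<exists>S. wcq_partition G t \<phi> Q m S"
    then obtain S where part: "wcq_partition G t \<phi> Q m S" ..
    have covers: "(\<Union>i<t. S i) = Q"
      using wcq_partition_covers[OF assms(5) part] deg bound assms(6) by simp
    show "\<exists>f. wcq_balanced_cover G t \<phi> Q m f"
      by (rule covering_wcq_partition_imp_balanced_cover[OF inj _ _ assms(5) part covers])
        (use nz closed in auto)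
  qed
  thus ?thesis unfolding wcq_partition_def wcq_structure_const_def .
qed

end
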